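(* Let $A$ and $B$ be strings with LZ77 parses $Z_A$ and $Z_B$, viewed as strings of tuples. Suppose Alice knows $A$, Bob knows $B$, and the length $\mathrm{LCP}(Z_A,Z_B)$ of the longest common prefix of $Z_A$ and $Z_B$ is known. Then the parties can determine $\ell=\mathrm{LCP}(A,B)$ using $O(1)$ rounds and $O(\lg\ell)$ communication.
   Context: $\mathrm{LCP}(X,Y)$ is the length of the longest common prefix of $X$ and $Y$. The LZ77 parse (without self-references) of a string $S$ divides $S$ greedily from left to right into phrases. The $i$-th phrase, starting at $u_i$, is the longest substring with an earlier occurrence (its source) starting left of $u_i$ and not overlapping the phrase, followed by the next symbol. It is represented as the tuple $(s_i,l_i,\alpha_i)$: source start, source length, and next symbol. A parse is a string over the alphabet of such tuples. Both parties use the same deterministic parsing rule (e.g. leftmost source), so equal strings get equal parses. *)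

theory Defs
  imports Complex_Main
begin

fun lcp :: "'b list \<Rightarrow> 'b list \<Rightarrow> nat" where
  "lcp (x # xs) (y # ys) = (if x = y then Suc (lcp xs ys) else 0)"
| "lcp _ _ = 0"

section \<open>LZ77 parse without self-references (positions are 0-based)\<close>

definition lz_len :: "'a list \<Rightarrow> nat \<Rightarrow> nat" where
  "lz_len S u = (GREATEST l. u + l < length S \<and>
      (\<exists>s. s + l \<le> u \<and> take l (drop s S) = take l (drop u S)))"

text \<open>Deterministic rule: the leftmost source.\<close>
definition lz_src :: "'a list \<Rightarrow> nat \<Rightarrow> nat" where
  "lz_src S u = (LEAST s. s + lz_len S u \<le> u \<and>
      take (lz_len S u) (drop s S) = take (lz_len S u) (drop u S))"

function lz77_from :: "'a list \<Rightarrow> nat \<Rightarrow> (nat \<times> nat \<times> 'a) list" where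
  "lz77_from S u = (if u < length S
     then (lz_src S u, lz_len S u, S ! (u + lz_len S u)) # lz77_from S (u + lz_len S u + 1)
     else [])"
  by pat_completeness auto
termination by (relation "measure (\<lambda>(S, u). length S - u)") auto

definition lz77 :: "'a list \<Rightarrow> (nat \<times> nat \<times> 'a) list" where
  "lz77 S = lz77_from S 0"

text \<open>The message of a round is a bit string computed by the speaker from its own input,
  the common knowledge k, the round number and the transcript so far.\<close>
fun transcript ::
  "(nat \<Rightarrow> 'x \<Rightarrow> nat \<Rightarrow> bool list list \<Rightarrow> bool list) \<Rightarrow>
   (nat \<Rightarrow> 'y \<Rightarrow> nat \<Rightarrow> bool list list \<Rightarrow> bool list) \<Rightarrow>
   'x \<Rightarrow> 'y \<Rightarrow> nat \<Rightarrow> nat \<Rightarrow> bool list list" where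
  "transcript fA fB x y k 0 = []"
| "transcript fA fB x y k (Suc i) =
     (let t = transcript fA fB x y k i in
      t @ [if even i then fA i x k t else fB i y k t])"

definition comm_bits :: "bool list list \<Rightarrow> nat" where
  "comm_bits t = sum_list (map length t)"

end

theory Submission
  imports Defs
begin

text \<open>
  Let \<open>k = LCP(Z\<^sub>A, Z\<^sub>B)\<close>. The first \<open>k\<close> phrases of the two parses agree, so \<open>A\<close> and \<open>B\<close>
  share the prefix of length \<open>q\<close> that ends where phrase \<open>k\<close> starts. Each party sends the
  source \<open>(s, l)\<close> of its phrase \<open>k\<close>; as the source lies inside the shared prefix, the other
  party can rebuild the first \<open>q + l\<close> symbols of the sender's string and compare them with its
  own string. Because the \<open>k\<close>-th phrases differ (or one parse ends before them),
  \<open>LCP(A, B) \<le> q + max l\<^sub>A l\<^sub>B\<close>: if, say, \<open>l\<^sub>A < l\<^sub>B\<close>, agreement up to position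
  \<open>q + l\<^sub>A + 1\<close> would let \<open>A\<close>'s phrase copy one more symbol from \<open>B\<close>'s source,
  contradicting greediness; if \<open>l\<^sub>A = l\<^sub>B\<close>, agreement beyond \<open>q + l\<^sub>A\<close> would force the
  same leftmost source and the same next symbol. Hence the larger of the two comparison
  results is \<open>LCP(A, B)\<close>. Every number sent is at most \<open>LCP(A, B)\<close>, so six binary messages
  of \<open>O(log LCP(A, B))\<close> bits suffice.
\<close>

lemma le_lcp_iff:
  "n \<le> lcp xs ys \<longleftrightarrow> n \<le> length xs \<and> n \<le> length ys \<and> take n xs = take n ys"
proof (induction xs ys arbitrary: n rule: lcp.induct)
  case (1 x xs y ys)
  then show ?case by (cases n) auto
qed auto

lemma lcp_commute: "lcp xs ys = lcp ys xs"
  by (induction xs ys rule: lcp.induct) auto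

lemma lcp_take_right: "lcp xs (take n ys) = min (lcp xs ys) n"
proof (induction xs ys arbitrary: n rule: lcp.induct)
  case (1 x xs y ys)
  then show ?case by (cases n) auto
qed (auto simp: take_Cons' lcp.elims)

lemma nth_lcp_neq:
  "lcp xs ys < length xs \<Longrightarrow> lcp xs ys < length ys \<Longrightarrow> xs ! lcp xs ys \<noteq> ys ! lcp xs ys"
  by (induction xs ys rule: lcp.induct) auto

lemma lcp_le_length: "lcp xs ys \<le> length xs" "lcp xs ys \<le> length ys"
  using le_lcp_iff[of "lcp xs ys" xs ys] by auto

lemma take_eq_if_le_lcp: "n \<le> lcp xs ys \<Longrightarrow> take n xs = take n ys"
  by (simp add: le_lcp_iff)

lemma nth_eq_if_less_lcp: "i < lcp xs ys \<Longrightarrow> xs ! i = ys ! i"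
  using take_eq_if_le_lcp[of "Suc i" xs ys] lcp_le_length[of xs ys]
  by (metis Suc_leI lessI nth_take)

text \<open>Little-endian and without leading zeros. The code is not self-delimiting, which is why
  the protocol sends each number in a round of its own.\<close>

fun bin :: "nat \<Rightarrow> bool list" where
  "bin n = (if n = 0 then [] else odd n # bin (n div 2))"

declare bin.simps [simp del]

lemma bin_0 [simp]: "bin 0 = []"
  by (simp add: bin.simps)

lemma bin_pos: "0 < n \<Longrightarrow> bin n = odd n # bin (n div 2)"
  by (simp add: bin.simps)

primrec unbin :: "bool list \<Rightarrow> nat" where
  "unbin [] = 0"
| "unbin (b # bs) = of_bool b + 2 * unbin bs"

lemma unbin_bin [simp]: "unbin (bin n) = n"
proof (induction n rule: bin.induct)
  case (1 n)
  then show ?case by (cases "n = 0") (auto simp: bin_pos)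
qed

lemma power_length_bin_le: "0 < n \<Longrightarrow> 2 ^ (length (bin n) - 1) \<le> n"
proof (induction n rule: bin.induct)
  case (1 n)
  show ?case
  proof (cases "n div 2 = 0")
    case True
    with "1.prems" have "n = 1" by auto
    then show ?thesis by (simp add: bin_pos)
  next
    case False
    with 1 have "2 ^ (length (bin (n div 2)) - 1) \<le> n div 2" by simp
    moreover have "bin (n div 2) \<noteq> []" using False by (simp add: bin_pos)
    ultimately show ?thesis using "1.prems" by (cases "bin (n div 2)") (auto simp: bin_pos)
  qed
qed

lemma length_bin_le_log:
  assumes "n \<le> L"
  shows "real (length (bin n)) \<le> 2 * log 2 (real L + 2)"
proof -
  have one_le: "1 \<le> log 2 (real L + 2)"
    using le_log2_of_power[of 1 "L + 2"] by simp
  have length_le: "real (length (bin n)) - 1 \<le> log 2 (real L + 2)" if "0 < n"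
  proof -
    have "2 ^ (length (bin n) - 1) \<le> L + 2"
      using power_length_bin_le[OF that] assms by linarith
    then have "real (length (bin n) - 1) \<le> log 2 (real L + 2)"
      using le_log2_of_power[of "length (bin n) - 1" "L + 2"] by (simp add: add.commute)
    then show ?thesis by linarith
  qed
  show ?thesis
  proof (cases "n = 0")
    case False
    with one_le length_le show ?thesis by linarith
  qed (use one_le in simp)
qed

section \<open>Structure of the LZ77 parse\<close>

definition lz_phrase :: "'a list \<Rightarrow> nat \<Rightarrow> nat \<times> nat \<times> 'a" where
  "lz_phrase S u = (lz_src S u, lz_len S u, S ! (u + lz_len S u))"

definition parsed_length :: "(nat \<times> nat \<times> 'a) list \<Rightarrow> nat" where
  "parsed_length ps = (\<Sum>(s, l, c) \<leftarrow> ps. Suc l)"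

lemma parsed_length_simps [simp]:
  "parsed_length [] = 0"
  "parsed_length ((s, l, c) # ps) = Suc l + parsed_length ps"
  by (simp_all add: parsed_length_def)

lemma parsed_length_take_le: "parsed_length (take k ps) \<le> parsed_length ps"
  by (induction ps arbitrary: k) (auto simp: take_Cons' parsed_length_def)

declare lz77_from.simps [simp del]

lemma lz77_from_Cons:
  "u < length S \<Longrightarrow> lz77_from S u = lz_phrase S u # lz77_from S (u + lz_len S u + 1)"
  by (simp add: lz77_from.simps lz_phrase_def)

lemma lz77_from_Nil: "length S \<le> u \<Longrightarrow> lz77_from S u = []"
  by (simp add: lz77_from.simps)

lemma lz_len_admissible:
  assumes "u < length S"
  shows "u + lz_len S u < length S
    \<and> (\<exists>s. s + lz_len S u \<le> u \<and> take (lz_len S u) (drop s S) = take (lz_len S u) (drop u S))"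
  unfolding lz_len_def
  by (rule GreatestI_nat[where k = 0 and b = "length S"]) (use assms in auto)

lemma lz_len_maximal:
  assumes "u + l < length S" "s + l \<le> u" "take l (drop s S) = take l (drop u S)"
  shows "l \<le> lz_len S u"
  unfolding lz_len_def
  by (rule Greatest_le_nat[where b = "length S"]) (use assms in auto)

lemma lz_src_occurrence:
  assumes "u < length S"
  shows "lz_src S u + lz_len S u \<le> u
    \<and> take (lz_len S u) (drop (lz_src S u) S) = take (lz_len S u) (drop u S)"
  unfolding lz_src_def by (rule LeastI_ex) (use lz_len_admissible[OF assms] in blast)

lemma take_drop_take: "s + l \<le> q \<Longrightarrow> take l (drop s (take q xs)) = take l (drop s xs)"
  by (simp add: drop_take min_def)

lemma take_lz_phrase_end:
  assumes "u < length S"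
  shows "take (u + lz_len S u + 1) S
    = take u S @ take (lz_len S u) (drop (lz_src S u) (take u S)) @ [S ! (u + lz_len S u)]"
proof -
  define l where "l = lz_len S u"
  have "u + l < length S" using lz_len_admissible[OF assms] by (simp add: l_def)
  then have "take (u + l + 1) S = take u S @ take l (drop u S) @ [S ! (u + l)]"
    by (simp add: take_add take_Suc_conv_app_nth)
  also have "take l (drop u S) = take l (drop (lz_src S u) (take u S))"
    using lz_src_occurrence[OF assms] by (simp add: l_def take_drop_take)
  finally show ?thesis by (simp add: l_def)
qed

lemma take_lz_phrase_end_eq:
  assumes "take u A = take u B" "u < length A" "u < length B" "lz_phrase A u = lz_phrase B u"
  shows "take (u + lz_len A u + 1) A = take (u + lz_len A u + 1) B"
proof -
  have "lz_src A u = lz_src B u" "lz_len A u = lz_len B u"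
    and "A ! (u + lz_len A u) = B ! (u + lz_len B u)"
    using assms(4) unfolding lz_phrase_def by (metis prod.inject)+
  then show ?thesis
    using take_lz_phrase_end[OF assms(2)] take_lz_phrase_end[OF assms(3)] assms(1) by simp
qed

lemma parsed_length_lz77_from: "u \<le> length S \<Longrightarrow> parsed_length (lz77_from S u) = length S - u"
proof (induction S u rule: lz77_from.induct)
  case (1 S u)
  show ?case
  proof (cases "u < length S")
    case True
    moreover have "u + lz_len S u + 1 \<le> length S"
      using lz_len_admissible[OF True] by simp
    ultimately show ?thesis
      using "1.IH" by (simp add: lz77_from_Cons lz_phrase_def)
  qed (use "1.prems" in \<open>simp add: lz77_from_Nil\<close>)
qed

lemma drop_lz77_from:
  "drop j (lz77_from S u) = lz77_from S (u + parsed_length (take j (lz77_from S u)))"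
proof (induction j arbitrary: u)
  case (Suc j)
  show ?case
  proof (cases "u < length S")
    case True
    then show ?thesis by (simp add: lz77_from_Cons lz_phrase_def Suc.IH add.assoc)
  qed (simp add: lz77_from_Nil)
qed simp

lemma take_lz77_from_eq:
  "take u A = take u B \<Longrightarrow> take j (lz77_from A u) = take j (lz77_from B u) \<Longrightarrow>
   take (u + parsed_length (take j (lz77_from A u))) A = take (u + parsed_length (take j (lz77_from A u))) B"
proof (induction j arbitrary: u)
  case (Suc j)
  show ?case
  proof (cases "u < length A")
    case uA: True
    then have "lz77_from B u \<noteq> []"
      using Suc.prems(2) by (cases "lz77_from B u") (auto simp: lz77_from_Cons)
    then have uB: "u < length B" using lz77_from_Nil by (metis not_le)
    have phrase: "lz_phrase A u = lz_phrase B u"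
      and rest: "take j (lz77_from A (u + lz_len A u + 1)) = take j (lz77_from B (u + lz_len A u + 1))"
      using Suc.prems(2) by (auto simp: lz77_from_Cons[OF uA] lz77_from_Cons[OF uB] lz_phrase_def)
    from Suc.IH[OF take_lz_phrase_end_eq[OF Suc.prems(1) uA uB phrase] rest] show ?thesis
      by (simp add: lz77_from_Cons[OF uA] lz_phrase_def add.assoc)
  qed (use Suc.prems in \<open>simp add: lz77_from_Nil\<close>)
qed simp

definition lz_pos :: "'a list \<Rightarrow> nat \<Rightarrow> nat" where
  "lz_pos S k = parsed_length (take k (lz77 S))"

lemma drop_lz77: "drop k (lz77 S) = lz77_from S (lz_pos S k)"
  using drop_lz77_from[of k S 0] by (simp add: lz77_def lz_pos_def)

lemma lz_pos_le_length: "lz_pos S k \<le> length S"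
  using parsed_length_take_le[of k "lz77 S"] parsed_length_lz77_from[of 0 S]
  by (simp add: lz_pos_def lz77_def)

lemma lz_pos_length_lz77: "lz_pos S (length (lz77 S)) = length S"
  using parsed_length_lz77_from[of 0 S] by (simp add: lz_pos_def lz77_def)

lemma nth_lz77:
  assumes "k < length (lz77 S)"
  shows "lz_pos S k < length S \<and> lz77 S ! k = lz_phrase S (lz_pos S k)"
proof -
  have "lz77_from S (lz_pos S k) \<noteq> []"
    using assms drop_lz77[of k S] by (metis drop_eq_Nil not_le)
  then have pos: "lz_pos S k < length S" using lz77_from_Nil by (metis not_le)
  have "lz77 S ! k = hd (drop k (lz77 S))" using assms by (simp add: hd_drop_conv_nth)
  with pos show ?thesis by (simp add: drop_lz77 lz77_from_Cons)
qed

lemma lz_pos_common_prefix: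
  assumes "k \<le> lcp (lz77 A) (lz77 B)"
  shows "lz_pos B k = lz_pos A k" "take (lz_pos A k) A = take (lz_pos A k) B"
  using take_eq_if_le_lcp[OF assms] take_lz77_from_eq[of 0 A B k]
  by (simp_all add: lz_pos_def lz77_def)

section \<open>Comparing the phrases that start at a common position\<close>

text \<open>If \<open>A\<close> and \<open>B\<close> agreed further, the source of \<open>B\<close>'s longer phrase would also be an
  occurrence of \<open>A\<close>'s phrase extended by one symbol.\<close>

lemma lcp_le_if_lz_len_less:
  assumes prefix: "take q A = take q B" and "q < length B" and shorter: "lz_len A q < lz_len B q"
  shows "lcp A B \<le> q + lz_len A q + 1"
proof (rule ccontr)
  define l where "l = lz_len A q + 1"
  define s where "s = lz_src B q"
  assume "\<not> ?thesis"
  then have long: "q + l < lcp A B" by (simp add: l_def)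
  have src: "s + lz_len B q \<le> q" "take (lz_len B q) (drop s B) = take (lz_len B q) (drop q B)"
    using lz_src_occurrence[OF \<open>q < length B\<close>] by (simp_all add: s_def)
  have l_le: "l \<le> lz_len B q" using shorter by (simp add: l_def)
  have "take l (drop s A) = take l (drop s (take q A))"
    using src l_le by (simp add: take_drop_take)
  also have "\<dots> = take l (drop s B)"
    using src l_le by (simp add: prefix take_drop_take)
  also have "\<dots> = take l (take (lz_len B q) (drop s B))"
    using l_le by (simp add: min_absorb1)
  also have "\<dots> = take l (drop q B)"
    using l_le by (simp add: src min_absorb1)
  also have "\<dots> = take l (drop q A)"
    using take_eq_if_le_lcp[of "l + q" A B] long by (simp add: take_drop)
  finally have occurrence: "take l (drop s A) = take l (drop q A)" .
  have "q + l < length A" using long lcp_le_length(1)[of A B] by simp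
  moreover have "s + l \<le> q" using src l_le by simp
  ultimately have "l \<le> lz_len A q" using occurrence by (rule lz_len_maximal)
  then show False by (simp add: l_def)
qed

lemma lz_src_cong:
  assumes same_len: "lz_len A q = lz_len B q"
    and prefix: "take (q + lz_len A q) A = take (q + lz_len A q) B"
  shows "lz_src A q = lz_src B q"
proof -
  define l where "l = lz_len A q"
  have factor_eq: "take l (drop s A) = take l (drop s B)" if "s + l \<le> q + l" for s
    using take_drop_take[OF that, of A] take_drop_take[OF that, of B] prefix
    by (simp add: l_def)
  have "(\<lambda>s. s + l \<le> q \<and> take l (drop s A) = take l (drop q A))
      = (\<lambda>s. s + l \<le> q \<and> take l (drop s B) = take l (drop q B))"
    using factor_eq[of q] factor_eq by fastforce
  then show ?thesis
    unfolding lz_src_def same_len[symmetric] l_def by simp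
qed

lemma lz_phrase_eq_if_lz_len_eq:
  assumes "lz_len A q = lz_len B q" "q + lz_len A q < lcp A B"
  shows "lz_phrase A q = lz_phrase B q"
proof -
  have "lz_src A q = lz_src B q"
    using assms by (intro lz_src_cong take_eq_if_le_lcp) auto
  moreover have "A ! (q + lz_len A q) = B ! (q + lz_len A q)"
    using assms(2) by (rule nth_eq_if_less_lcp)
  ultimately show ?thesis using assms(1) by (simp add: lz_phrase_def)
qed

lemma lcp_le_if_lz_phrase_neq:
  assumes prefix: "take q A = take q B" and "q < length A" "q < length B"
    and differ: "lz_phrase A q \<noteq> lz_phrase B q"
  shows "lcp A B \<le> q + max (lz_len A q) (lz_len B q)"
proof (cases "lz_len A q" "lz_len B q" rule: linorder_cases)
  case less
  with lcp_le_if_lz_len_less[OF prefix \<open>q < length B\<close>] show ?thesis by simp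
next
  case equal
  with differ lz_phrase_eq_if_lz_len_eq[OF equal] show ?thesis by fastforce
next
  case greater
  with lcp_le_if_lz_len_less[OF prefix[symmetric] \<open>q < length A\<close>] show ?thesis
    by (simp add: lcp_commute)
qed

section \<open>The protocol\<close>

text \<open>A party whose parse has no phrase \<open>k\<close> sends \<open>(0, 0)\<close>: its string then ends at
  position \<open>lz_pos S k\<close>, so nothing beyond the common prefix has to be rebuilt.\<close>

definition phrase_source :: "'a list \<Rightarrow> nat \<Rightarrow> nat \<times> nat" where
  "phrase_source S k =
     (if k < length (lz77 S) then (case lz77 S ! k of (s, l, c) \<Rightarrow> (s, l)) else (0, 0))"

lemma phrase_source_occurrence:
  assumes "phrase_source S k = (s, l)"
  shows "s + l \<le> lz_pos S k \<and> take l (drop s S) = take l (drop (lz_pos S k) S)"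
proof (cases "k < length (lz77 S)")
  case True
  with assms nth_lz77[OF True]
  have "lz_pos S k < length S" "s = lz_src S (lz_pos S k)" "l = lz_len S (lz_pos S k)"
    by (simp_all add: phrase_source_def lz_phrase_def)
  then show ?thesis using lz_src_occurrence by simp
qed (use assms in \<open>simp add: phrase_source_def\<close>)

lemma lz_pos_le_lcp:
  assumes "k \<le> lcp (lz77 A) (lz77 B)"
  shows "lz_pos A k \<le> lcp A B"
  using lz_pos_common_prefix[OF assms] lz_pos_le_length[of A k] lz_pos_le_length[of B k]
  by (simp add: le_lcp_iff)

lemma phrase_source_le_lcp:
  assumes "k \<le> lcp (lz77 A) (lz77 B)"
  shows "fst (phrase_source A k) + snd (phrase_source A k) \<le> lcp A B"
  using phrase_source_occurrence[OF prod.collapse[symmetric]] lz_pos_le_lcp[OF assms] le_trans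
  by blast

lemma lcp_le_lz_pos_add_max:
  assumes k: "k = lcp (lz77 A) (lz77 B)"
  shows "lcp A B \<le> lz_pos A k + max (snd (phrase_source A k)) (snd (phrase_source B k))"
proof -
  define q where "q = lz_pos A k"
  have pos_B: "lz_pos B k = q" and prefix: "take q A = take q B"
    using lz_pos_common_prefix[of k A B] k by (simp_all add: q_def)
  consider "k = length (lz77 A)" | "k = length (lz77 B)"
    | "k < length (lz77 A)" "k < length (lz77 B)"
    using k lcp_le_length[of "lz77 A" "lz77 B"] by linarith
  then show ?thesis
  proof cases
    case 1
    then show ?thesis using lz_pos_length_lz77[of A] lcp_le_length(1)[of A B] by simp
  next
    case 2
    then show ?thesis using lz_pos_length_lz77[of B] lcp_le_length(2)[of A B] pos_B q_def by simp
  next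
    case 3
    then have "lz77 A ! k \<noteq> lz77 B ! k" using k nth_lcp_neq by blast
    with 3 nth_lz77[of k A] nth_lz77[of k B] pos_B
    have "q < length A" "q < length B" "lz_phrase A q \<noteq> lz_phrase B q"
      by (simp_all add: q_def)
    from lcp_le_if_lz_phrase_neq[OF prefix this] 3 nth_lz77[of k A] nth_lz77[of k B] pos_B
    show ?thesis by (simp add: phrase_source_def lz_phrase_def q_def)
  qed
qed

definition copied_prefix :: "'a list \<Rightarrow> nat \<Rightarrow> nat \<times> nat \<Rightarrow> 'a list" where
  "copied_prefix S k src = take (lz_pos S k) S @ take (snd src) (drop (fst src) S)"

lemma copied_prefix_phrase_source:
  assumes k: "k \<le> lcp (lz77 A) (lz77 B)" and src: "phrase_source A k = (s, l)"
  shows "copied_prefix B k (s, l) = take (lz_pos A k + l) A"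
proof -
  define q where "q = lz_pos A k"
  have pos_B: "lz_pos B k = q" and prefix: "take q A = take q B"
    using lz_pos_common_prefix[OF k] by (simp_all add: q_def)
  have inside: "s + l \<le> q" and copy: "take l (drop s A) = take l (drop q A)"
    using phrase_source_occurrence[OF src] by (simp_all add: q_def)
  have "take l (drop s B) = take l (drop s A)"
    using take_drop_take[OF inside, of A] take_drop_take[OF inside, of B] prefix by simp
  then have "copied_prefix B k (s, l) = take q A @ take l (drop q A)"
    by (simp add: copied_prefix_def pos_B prefix copy)
  then show ?thesis by (simp add: take_add q_def)
qed

lemma lcp_copied_prefix:
  assumes "k \<le> lcp (lz77 A) (lz77 B)"
  shows "lcp B (copied_prefix B k (phrase_source A k))
    = min (lcp A B) (lz_pos A k + snd (phrase_source A k))"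
  using copied_prefix_phrase_source[OF assms, of "fst (phrase_source A k)" "snd (phrase_source A k)"]
  by (simp add: lcp_take_right lcp_commute)

text \<open>\<open>t ! i\<close> and \<open>t ! (i + 2)\<close> are the source start and length sent by the other party.\<close>

definition lcp_estimate :: "'a list \<Rightarrow> nat \<Rightarrow> bool list list \<Rightarrow> nat \<Rightarrow> nat" where
  "lcp_estimate S k t i = lcp S (copied_prefix S k (unbin (t ! i), unbin (t ! (i + 2))))"

definition alice_msg :: "nat \<Rightarrow> 'a list \<Rightarrow> nat \<Rightarrow> bool list list \<Rightarrow> bool list" where
  "alice_msg i A k t =
     (if i = 0 then bin (fst (phrase_source A k))
      else if i = 2 then bin (snd (phrase_source A k))
      else if i = 4 then bin (lcp_estimate A k t 1)
      else [])"

definition bob_msg :: "nat \<Rightarrow> 'a list \<Rightarrow> nat \<Rightarrow> bool list list \<Rightarrow> bool list" where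
  "bob_msg i B k t =
     (if i = 1 then bin (fst (phrase_source B k))
      else if i = 3 then bin (snd (phrase_source B k))
      else if i = 5 then bin (lcp_estimate B k t 0)
      else [])"

definition alice_out :: "'a list \<Rightarrow> nat \<Rightarrow> bool list list \<Rightarrow> nat" where
  "alice_out A k t = max (lcp_estimate A k t 1) (unbin (t ! 5))"

definition bob_out :: "'a list \<Rightarrow> nat \<Rightarrow> bool list list \<Rightarrow> nat" where
  "bob_out B k t = max (lcp_estimate B k t 0) (unbin (t ! 4))"

lemma transcript_alice_bob:
  "transcript alice_msg bob_msg A B k 6 = map bin
     [fst (phrase_source A k), fst (phrase_source B k), snd (phrase_source A k),
      snd (phrase_source B k), lcp A (copied_prefix A k (phrase_source B k)),
      lcp B (copied_prefix B k (phrase_source A k))]"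
proof -
  have six: "(6::nat) = Suc (Suc (Suc (Suc (Suc (Suc 0)))))" by simp
  show ?thesis
    unfolding six by (simp add: Let_def alice_msg_def bob_msg_def lcp_estimate_def nth_append)
qed

lemma comm_bits_le:
  "(\<And>m. m \<in> set t \<Longrightarrow> real (length m) \<le> b) \<Longrightarrow> real (comm_bits t) \<le> real (length t) * b"
proof (induction t)
  case (Cons m t)
  then have "real (length m) \<le> b" "real (comm_bits t) \<le> real (length t) * b" by auto
  then show ?case by (simp add: comm_bits_def algebra_simps)
qed (simp add: comm_bits_def)

lemma alice_bob_protocol:
  assumes k_def: "k = lcp (lz77 A) (lz77 B)" and t_def: "t = transcript alice_msg bob_msg A B k 6"
  shows "alice_out A k t = lcp A B" "bob_out B k t = lcp A B"
    and "real (comm_bits t) \<le> 12 * log 2 (real (lcp A B) + 2)"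
proof -
  define L where "L = lcp A B"
  define q where "q = lz_pos A k"
  have k_AB: "k \<le> lcp (lz77 A) (lz77 B)" and k_BA: "k \<le> lcp (lz77 B) (lz77 A)"
    by (simp_all add: k_def lcp_commute)
  have pos_B: "lz_pos B k = q"
    using lz_pos_common_prefix(1)[OF k_AB] by (simp add: q_def)
  have est_A: "lcp A (copied_prefix A k (phrase_source B k)) = min L (q + snd (phrase_source B k))"
    using lcp_copied_prefix[OF k_BA] by (simp add: L_def lcp_commute pos_B)
  have est_B: "lcp B (copied_prefix B k (phrase_source A k)) = min L (q + snd (phrase_source A k))"
    using lcp_copied_prefix[OF k_AB] by (simp add: L_def q_def)
  have t: "t = map bin [fst (phrase_source A k), fst (phrase_source B k), snd (phrase_source A k),
      snd (phrase_source B k), min L (q + snd (phrase_source B k)), min L (q + snd (phrase_source A k))]"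
    by (simp add: t_def transcript_alice_bob est_A est_B)
  have "max (min L (q + snd (phrase_source B k))) (min L (q + snd (phrase_source A k))) = L"
    using lcp_le_lz_pos_add_max[OF k_def] by (simp add: L_def q_def)
  then show "alice_out A k t = lcp A B" "bob_out B k t = lcp A B"
    by (simp_all add: alice_out_def bob_out_def lcp_estimate_def t est_A est_B L_def max.commute)
  have "fst (phrase_source S k) \<le> L \<and> snd (phrase_source S k) \<le> L" if "S \<in> {A, B}" for S
    using that phrase_source_le_lcp[OF k_AB] phrase_source_le_lcp[OF k_BA]
    by (auto simp: L_def lcp_commute)
  then have "real (length m) \<le> 2 * log 2 (real L + 2)" if "m \<in> set t" for m
    using that by (auto simp: t intro!: length_bin_le_log)
  from comm_bits_le[of t, OF this] show "real (comm_bits t) \<le> 12 * log 2 (real (lcp A B) + 2)"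
    by (simp add: t L_def)
qed

theorem lemma6:
  shows "\<exists>(r::nat) (c::real)
           (fA :: nat \<Rightarrow> 'a list \<Rightarrow> nat \<Rightarrow> bool list list \<Rightarrow> bool list)
           (fB :: nat \<Rightarrow> 'a list \<Rightarrow> nat \<Rightarrow> bool list list \<Rightarrow> bool list)
           (outA :: 'a list \<Rightarrow> nat \<Rightarrow> bool list list \<Rightarrow> nat)
           (outB :: 'a list \<Rightarrow> nat \<Rightarrow> bool list list \<Rightarrow> nat).
         \<forall>A B :: 'a list.
           let k = lcp (lz77 A) (lz77 B);
               t = transcript fA fB A B k r;
               lcpAB = lcp A B
           in outA A k t = lcpAB \<and> outB B k t = lcpAB \<and>
              real (comm_bits t) \<le> c * log 2 (real lcpAB + 2)"
  unfolding Let_def using alice_bob_protocol[OF refl refl] by blast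

end
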